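(* Let $F=(n_F)_{n\ge0}$ be the sequence of natural numbers, $n_F=n$ for $n\ge1$. Then for all integers $k,n$ with $0\le k<n$, the layer $\langle\Phi_{k+1}\to\Phi_n\rangle$ of the cobweb poset of $F$ (which has $m=n-k$ levels) admits at least one tiling by blocks of type $\sigma P_m$.
   Context: Notation: $n_F\equiv F_n$. For a sequence $F=(n_F)_{n\ge0}$ of nonnegative integers, the cobweb poset of $F$ has, for each $s\ge1$, a level $\Phi_s$ consisting of $s_F$ distinct vertices (levels pairwise disjoint), plus a root level $\Phi_0$ with one vertex; for $x\in\Phi_i$, $y\in\Phi_j$ one has $x<y$ iff $i<j$. For $1\le a\le b$, the layer $\langle\Phi_a\to\Phi_b\rangle$ is the subposet on $\Phi_a\cup\dots\cup\Phi_b$; it has $m=b-a+1$ levels, and its maximal chains are exactly the tuples $(x_a,\dots,x_b)$ with $x_j\in\Phi_j$, i.e. the set $\Phi_a\times\dots\times\Phi_b$. For a permutation $\sigma$ of $\{1,\dots,m\}$, a block of type $\sigma P_m$ in this layer is the subposet induced on $V_a\cup\dots\cup V_b$ where $V_{a-1+i}\subseteq\Phi_{a-1+i}$ and $|V_{a-1+i}|=\sigma(i)_F$ for $i=1,\dots,m$ (a copy of the prime cobweb poset $P_m$, whose levels have sizes $1_F,\dots,m_F$, with its levels permuted by $\sigma$); its maximal chains form the set $V_a\times\dots\times V_b$. A tiling of the layer by blocks of type $\sigma P_m$ is a finite family of such blocks ($\sigma$ may vary from block to block) that are pairwise max-disjoint (no two share a maximal chain) and together contain every maximal chain of the layer; equivalently,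 the sets $V_a\times\dots\times V_b$ of the blocks partition $\Phi_a\times\dots\times\Phi_b$. *)

theory Defs
  imports "HOL-Library.FuncSet"
begin

text \<open>Cobweb poset of a sequence F: level s (s \<ge> 1) is modelled as the vertex set
  {0..<F s}, tagged implicitly by its level index s. Maximal chains of the layer
  from level a to level b are the tuples x with x j in level j, i.e. the
  extensional functions in PiE {a..b} (cobweb_level F).\<close>

definition cobweb_level :: "(nat \<Rightarrow> nat) \<Rightarrow> nat \<Rightarrow> nat set" where
  "cobweb_level F s = {0..<F s}"

definition layer_chains :: "(nat \<Rightarrow> nat) \<Rightarrow> nat \<Rightarrow> nat \<Rightarrow> (nat \<Rightarrow> nat) set" where
  "layer_chains F a b = PiE {a..b} (cobweb_level F)"

definition is_block :: "(nat \<Rightarrow> nat) \<Rightarrow> nat \<Rightarrow> nat \<Rightarrow> (nat \<Rightarrow> nat set) \<Rightarrow> bool" where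
  "is_block F a b V \<longleftrightarrow>
     (\<forall>j\<in>{a..b}. V j \<subseteq> cobweb_level F j) \<and>
     (\<forall>j. j \<notin> {a..b} \<longrightarrow> V j = {}) \<and>
     (\<exists>\<sigma>. bij_betw \<sigma> {1..b-a+1} {1..b-a+1} \<and>
          (\<forall>i\<in>{1..b-a+1}. card (V (a - 1 + i)) = F (\<sigma> i)))"

definition block_chains :: "nat \<Rightarrow> nat \<Rightarrow> (nat \<Rightarrow> nat set) \<Rightarrow> (nat \<Rightarrow> nat) set" where
  "block_chains a b V = PiE {a..b} V"

definition is_tiling :: "(nat \<Rightarrow> nat) \<Rightarrow> nat \<Rightarrow> nat \<Rightarrow> (nat \<Rightarrow> nat set) set \<Rightarrow> bool" where
  "is_tiling F a b T \<longleftrightarrow>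
     finite T \<and>
     (\<forall>V\<in>T. is_block F a b V) \<and>
     (\<forall>V\<in>T. \<forall>W\<in>T. V \<noteq> W \<longrightarrow> block_chains a b V \<inter> block_chains a b W = {}) \<and>
     (\<Union>V\<in>T. block_chains a b V) = layer_chains F a b"

end

theory Submission
  imports Defs
begin

(* Work with a general layer: an index set I of levels and a
   family L of level sets, whose maximal chains are PiE I L.  A prime block is a
   subfamily V of L whose level sizes are a permutation of 1..|I|.  We show:
   if the level sizes of L are a permutation of k+1..n, the layer can be tiled by
   prime blocks.  Induction on n, the largest level size: if k = 0 the layer is
   itself a prime block.  Otherwise split the largest level L p into a part A of
   size |I| and a rest B of size k.  The chains through A are tiled by tiling the
   layer I - {p} (sizes k+1..n-1) and adjoining A as the top level of every block;
   the chains through B form a layer with sizes k..n-1.  Both are handled by the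
   induction hypothesis, and the two tilings are disjoint because they use
   disjoint parts of level p.  Finally, prime blocks of the layer {k+1..n} of the
   cobweb poset of the natural numbers are exactly blocks of type sigma P_m. *)

definition prime_block :: "nat set \<Rightarrow> (nat \<Rightarrow> nat set) \<Rightarrow> (nat \<Rightarrow> nat set) \<Rightarrow> bool" where
  "prime_block I L V \<longleftrightarrow> (\<forall>j\<in>I. V j \<subseteq> L j) \<and> (\<forall>j. j \<notin> I \<longrightarrow> V j = {}) \<and>
     bij_betw (\<lambda>j. card (V j)) I {1..card I}"

definition tiles :: "nat set \<Rightarrow> (nat \<Rightarrow> nat set) \<Rightarrow> (nat \<Rightarrow> nat set) set \<Rightarrow> bool" where
  "tiles I L T \<longleftrightarrow> finite T \<and> (\<forall>V\<in>T. prime_block I L V) \<and>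
     (\<forall>V\<in>T. \<forall>W\<in>T. V \<noteq> W \<longrightarrow> PiE I V \<inter> PiE I W = {}) \<and>
     (\<Union>V\<in>T. PiE I V) = PiE I L"

lemma PiE_fun_upd_iff:
  assumes "p \<in> I"
  shows "x \<in> PiE I (L(p:=S)) \<longleftrightarrow> x \<in> extensional I \<and> x p \<in> S \<and> (\<forall>i\<in>I-{p}. x i \<in> L i)"
  using assms unfolding PiE_iff by (auto split: if_splits)

lemma tiles_singleton:
  assumes "bij_betw (\<lambda>j. card (L j)) I {1..card I}"
  shows "tiles I L {\<lambda>j. if j \<in> I then L j else {}}"
proof -
  have "bij_betw (\<lambda>j. card (if j \<in> I then L j else {})) I {1..card I}"
    using assms by (rule bij_betw_cong[THEN iffD1, rotated]) auto
  moreover have "PiE I (\<lambda>j. if j \<in> I then L j else {}) = PiE I L"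
    by (rule PiE_cong) auto
  ultimately show ?thesis unfolding tiles_def prime_block_def by auto
qed

lemma tiles_Un_level:
  assumes tA: "tiles I (L(p:=A)) TA" and tB: "tiles I (L(p:=B)) TB"
    and p: "p \<in> I" and disj: "A \<inter> B = {}"
  shows "tiles I (L(p:=A\<union>B)) (TA \<union> TB)"
proof -
  have blockA: "prime_block I (L(p:=A)) V" if "V \<in> TA" for V
    using tA that unfolding tiles_def by auto
  have blockB: "prime_block I (L(p:=B)) W" if "W \<in> TB" for W
    using tB that unfolding tiles_def by auto
  have blocks: "prime_block I (L(p:=A\<union>B)) V" if "V \<in> TA \<union> TB" for V
  proof (cases "V \<in> TA")
    case True
    then show ?thesis using blockA unfolding prime_block_def by (fastforce split: if_splits)
  next
    case False
    then show ?thesis using that blockB unfolding prime_block_def by (fastforce split: if_splits)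
  qed
  have cross: "PiE I V \<inter> PiE I W = {}" if "V \<in> TA" "W \<in> TB" for V W
  proof -
    have "V p \<subseteq> A" "W p \<subseteq> B"
      using blockA[OF that(1)] blockB[OF that(2)] p unfolding prime_block_def by force+
    then show ?thesis using disj p by (auto simp: PiE_iff) blast
  qed
  have "PiE I (L(p:=A\<union>B)) = PiE I (L(p:=A)) \<union> PiE I (L(p:=B))"
    by (rule set_eqI) (simp only: Un_iff PiE_fun_upd_iff[OF p], blast)
  moreover have "\<forall>V\<in>TA \<union> TB. \<forall>W\<in>TA \<union> TB. V \<noteq> W \<longrightarrow> PiE I V \<inter> PiE I W = {}"
    using tA tB cross unfolding tiles_def by (metis Int_commute Un_iff)
  ultimately show ?thesis
    using blocks tA tB unfolding tiles_def by auto
qed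

lemma level_sizes_fun_upd:
  assumes "bij_betw (\<lambda>j. card (L j)) (I - {p}) S" and "p \<in> I" and "card A \<notin> S"
  shows "bij_betw (\<lambda>j. card ((L(p:=A)) j)) I (insert (card A) S)"
proof -
  have "bij_betw (\<lambda>j. card ((L(p:=A)) j)) (I - {p}) S"
    using assms(1) by (rule bij_betw_cong[THEN iffD1, rotated]) auto
  then have "bij_betw (\<lambda>j. card ((L(p:=A)) j)) ((I - {p}) \<union> {p}) (S \<union> {card A})"
    using notIn_Un_bij_betw3[of p "I - {p}" _ S] assms(3) by auto
  moreover have "(I - {p}) \<union> {p} = I" using assms(2) by auto
  ultimately show ?thesis by simp
qed

lemma PiE_insert_restrict:
  assumes "p \<notin> I"
  shows "x \<in> PiE (insert p I) (V(p:=A)) \<longleftrightarrow> x p \<in> A \<and> x(p:=undefined) \<in> PiE I V"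
  using assms by (auto simp: PiE_iff extensional_def split: if_splits)

lemma tiles_insert_level:
  assumes t: "tiles I L T" and p: "p \<notin> I" and fin: "finite I"
    and cA: "card A = Suc (card I)"
  shows "tiles (insert p I) (L(p:=A)) ((\<lambda>V. V(p:=A)) ` T)"
proof -
  have block: "prime_block (insert p I) (L(p:=A)) (V(p:=A))" if "V \<in> T" for V
  proof -
    have V: "prime_block I L V" using t that unfolding tiles_def by auto
    then have "bij_betw (\<lambda>j. card (V j)) (insert p I - {p}) {1..card I}"
      using p unfolding prime_block_def by simp
    from level_sizes_fun_upd[OF this insertI1, of A]
    have "bij_betw (\<lambda>j. card ((V(p:=A)) j)) (insert p I) (insert (Suc (card I)) {1..card I})"
      using cA by simp
    moreover have "insert (Suc (card I)) {1..card I} = {1..Suc (card I)}" by auto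
    ultimately show ?thesis using V p fin unfolding prime_block_def by auto
  qed
  have disjoint: "PiE (insert p I) (V(p:=A)) \<inter> PiE (insert p I) (W(p:=A)) = {}"
    if "V \<in> T" "W \<in> T" "V(p:=A) \<noteq> W(p:=A)" for V W
  proof -
    have "V \<noteq> W" using that by auto
    then have "PiE I V \<inter> PiE I W = {}" using t that unfolding tiles_def by blast
    then show ?thesis by (auto simp: PiE_insert_restrict[OF p]) blast
  qed
  have "(\<Union>V\<in>T. PiE (insert p I) (V(p:=A))) = PiE (insert p I) (L(p:=A))"
  proof (rule set_eqI)
    fix x
    have "(\<exists>V\<in>T. x(p:=undefined) \<in> PiE I V) \<longleftrightarrow> x(p:=undefined) \<in> PiE I L"
      using t unfolding tiles_def by blast
    then show "x \<in> (\<Union>V\<in>T. PiE (insert p I) (V(p:=A))) \<longleftrightarrow> x \<in> PiE (insert p I) (L(p:=A))"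
      by (auto simp: PiE_insert_restrict[OF p])
  qed
  then show ?thesis using t block disjoint unfolding tiles_def by auto
qed

lemma tiles_exist:
  assumes "bij_betw (\<lambda>j. card (L j)) I {k+1..n}"
  shows "\<exists>T. tiles I L T"
  using assms
proof (induction n arbitrary: k I L)
  case 0
  then have "I = {}" by (simp add: bij_betw_def)
  then show ?case using tiles_singleton[of L I] by (auto simp: bij_betw_def)
next
  case (Suc n)
  let ?c = "\<lambda>j. card (L j)"
  have finI: "finite I" using Suc.prems bij_betw_finite by blast
  have cardI: "card I = Suc n - k" using bij_betw_same_card[OF Suc.prems] by simp
  show ?case
  proof (cases "k = 0 \<or> I = {}")
    case True
    then have "bij_betw ?c I {1..card I}" using Suc.prems cardI by (auto simp: bij_betw_def)
    then show ?thesis using tiles_singleton by blast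
  next
    case False
    then obtain k' where k: "k = Suc k'" "k < Suc n" using cardI finI card_gt_0_iff[of I] by (cases k) auto
    have "Suc n \<in> ?c ` I" using Suc.prems k(2) unfolding bij_betw_def by simp
    then obtain p where p: "p \<in> I" "card (L p) = Suc n" by auto
    then have finLp: "finite (L p)" by (metis card.infinite nat.distinct(1))
    obtain A where A: "A \<subseteq> L p" "card A = card I"
      using obtain_subset_with_card_n[of "card I" "L p"] p cardI by auto
    define B where "B = L p - A"
    have cardB: "card B = k" unfolding B_def using A finLp p cardI k by (simp add: card_Diff_subset finite_subset)
    have rest: "bij_betw ?c (I - {p}) {k+1..n}"
      using bij_betw_DiffI[OF Suc.prems, of "{p}" "{Suc n}"] p k(2) by (auto simp: bij_betw_def)
    obtain T1 where "tiles (I - {p}) L T1" using Suc.IH[OF rest] by blast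
    moreover have "card A = Suc (card (I - {p}))"
      using A finI p cardI k(2) by (simp add: card_Diff_singleton)
    ultimately have "tiles (insert p (I - {p})) (L(p:=A)) ((\<lambda>V. V(p:=A)) ` T1)"
      using tiles_insert_level finI by blast
    then have tA: "tiles I (L(p:=A)) ((\<lambda>V. V(p:=A)) ` T1)"
      using p by (simp add: insert_absorb)
    have "bij_betw (\<lambda>j. card ((L(p:=B)) j)) I (insert k {k+1..n})"
      using level_sizes_fun_upd[OF rest p(1), of B] cardB by simp
    moreover have "insert k {k+1..n} = {k'+1..n}" using k by auto
    ultimately have "bij_betw (\<lambda>j. card ((L(p:=B)) j)) I {k'+1..n}" by simp
    then obtain T2 where tB: "tiles I (L(p:=B)) T2" using Suc.IH by blast
    have "tiles I (L(p:=A\<union>B)) (((\<lambda>V. V(p:=A)) ` T1) \<union> T2)"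
      using tiles_Un_level[OF tA tB p(1)] by (auto simp: B_def)
    moreover have "L(p:=A\<union>B) = L" using A unfolding B_def by (simp add: Un_absorb1)
    ultimately show ?thesis by auto
  qed
qed

text \<open>For the natural-number sequence, a prime block of the layer \<open>{a..b}\<close> (with
  \<open>a \<ge> 1\<close>) is a block of type \<open>\<sigma>P_m\<close>: take \<open>\<sigma> i = |V (a-1+i)|\<close>.\<close>

lemma prime_block_is_block:
  assumes "prime_block {a..b} (cobweb_level (\<lambda>s. s)) V" and "1 \<le> a" "a \<le> b"
  shows "is_block (\<lambda>s. s) a b V"
proof -
  have m: "card {a..b} = b - a + 1" using assms by simp
  have shift: "bij_betw (\<lambda>i. a - 1 + i) {1..b-a+1} {a..b}"
  proof -
    have "x \<in> (\<lambda>i. a - 1 + i) ` {1..b-a+1}" if "x \<in> {a..b}" for x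
      using that assms by (intro image_eqI[of _ _ "x - (a - 1)"]) auto
    then show ?thesis using assms by (auto simp: bij_betw_def inj_on_def)
  qed
  have "bij_betw (\<lambda>j. card (V j)) {a..b} {1..b-a+1}"
    using assms(1) m unfolding prime_block_def by simp
  from bij_betw_trans[OF shift this]
  have "bij_betw (\<lambda>i. card (V (a - 1 + i))) {1..b-a+1} {1..b-a+1}" by (simp add: comp_def)
  then show ?thesis using assms(1) unfolding is_block_def prime_block_def by auto
qed

theorem theorem1:
  fixes k n :: nat
  assumes "k < n"
  shows "\<exists>T. is_tiling (\<lambda>s. s) (k + 1) n T"
proof -
  let ?L = "cobweb_level (\<lambda>s. s)"
  have "bij_betw (\<lambda>j. card (?L j)) {k+1..n} {k+1..n}"
    by (simp add: cobweb_level_def bij_betw_def inj_on_def)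
  then obtain T where T: "tiles {k+1..n} ?L T" using tiles_exist by blast
  then have "\<forall>V\<in>T. is_block (\<lambda>s. s) (k+1) n V"
    using prime_block_is_block assms unfolding tiles_def by auto
  then have "is_tiling (\<lambda>s. s) (k + 1) n T"
    using T unfolding is_tiling_def tiles_def block_chains_def layer_chains_def by auto
  then show ?thesis by blast
qed

end
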